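(* For all integers $J\geq 0$ and $N\geq 0$, $\mathfrak{m}_{\mathrm{odd}}(0,2J+1;36N+r)\equiv 0\pmod 4$ for $r\in\{21,33\}$.
   Context: For $a\in\{-2,-1,0,1,2\}$ and integer $t\geq0$, the integers $\mathfrak{m}_{\mathrm{odd}}(a,t;n)$ are defined by $\sum_{n\geq0}\mathfrak{m}_{\mathrm{odd}}(a,t;n)q^n=\sum\prod_{k=1}^t\frac{q^{n_k}}{1+aq^{n_k}+q^{2n_k}}$, the sum running over all $t$-tuples of odd positive integers $n_1<n_2<\cdots<n_t$ (for $t=0$ the series is $1$). *)

theory Defs
  imports "HOL-Computational_Algebra.Formal_Power_Series"
begin

text \<open>The factor q^m / (1 + a q^m + q^(2m)) as an integer formal power series
  (the denominator has constant term 1 for m \<ge> 1, so it is invertible over int).\<close>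
definition modd_factor :: "int \<Rightarrow> nat \<Rightarrow> int fps" where
  "modd_factor a m =
     fps_X ^ m * fps_right_inverse (1 + fps_const a * fps_X ^ m + fps_X ^ (2 * m)) 1"

text \<open>Only sets of odd numbers \<le> n
  can contribute to the coefficient of q^n (each factor has order n_k), so the
  sum is truncated to those sets.\<close>
definition m_odd :: "int \<Rightarrow> nat \<Rightarrow> nat \<Rightarrow> int" where
  "m_odd a t n = fps_nth
     (\<Sum>S \<in> {S. S \<subseteq> {k. odd k \<and> k \<le> n} \<and> card S = t}.
        \<Prod>m\<in>S. modd_factor a m) n"

end

(*
  With q = fps_X and L = (n + 1) div 2, m_odd 0 t n is the coefficient of y^t q^n in
  P(y) = prod_{i<L} (1 + y q^(2i+1) / (1 + q^(4i+2))).  Clearing the denominators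
  D = prod_{i<L} (1 + q^(4i+2)) and writing y = z + 1/z, a finite Jacobi triple product gives
  2 D P(y) = sum_k q^(k^2) [2L, L+k]_(q^2) (z^k + z^-k).  Modulo q^(2L+1) each of these Gaussian
  binomials agrees with the central one C, so 2 D P(y) = C Theta(y) for the truncated theta series
  Theta(y) = sum_{|k| <= L} q^(k^2) (z^k + z^-k), and the coefficient of y^0 eliminates C and D:
  P_t Theta_0 = Theta_t modulo q^(2L+1).  Here Theta_0 has constant term 2 and all other
  coefficients divisible by 4, while every Theta_t is even and supported on squares; comparing
  coefficients of q^n modulo 8 then shows that 4 divides [q^n] P_t whenever n is not a sum of two
  squares.  The numbers 36N + 21 and 36N + 33 are
  divisible by 3 but not by 9, hence not sums of two squares.
*)

theory Submission
  imports Defs "HOL-Computational_Algebra.Polynomial"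
begin

unbundle fps_syntax

lemma fps_X_power_dvd_iff: "fps_X ^ M dvd (f :: 'a::comm_ring_1 fps) \<longleftrightarrow> (\<forall>i<M. f $ i = 0)"
proof
  assume "fps_X ^ M dvd f"
  then obtain g where "f = fps_X ^ M * g" by (elim dvdE)
  then show "\<forall>i<M. f $ i = 0" by (simp add: fps_X_power_mult_nth)
next
  assume "\<forall>i<M. f $ i = 0"
  then have "f = fps_X ^ M * fps_shift M f"
    by (intro fps_conv_fps_X_power_mult_fps_shift) (auto intro: subdegree_geI)
  then show "fps_X ^ M dvd f" by (rule dvdI)
qed

lemma fps_X_power_dvd_mult_2_iff:
  "fps_X ^ M dvd 2 * (f :: int fps) \<longleftrightarrow> fps_X ^ M dvd f"
  by (simp add: fps_X_power_dvd_iff numeral_fps_const)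

lemma fps_X_power_dvd_mult_unit_iff:
  fixes f u :: "'a::comm_ring_1 fps"
  assumes "u $ 0 = 1"
  shows "fps_X ^ M dvd u * f \<longleftrightarrow> fps_X ^ M dvd f"
proof
  assume "fps_X ^ M dvd u * f"
  then have "fps_X ^ M dvd fps_right_inverse u 1 * u * f"
    by (simp add: mult.assoc)
  moreover have "fps_right_inverse u 1 * u = 1"
    using fps_right_inverse[of u 1] assms by (simp add: mult.commute)
  ultimately show "fps_X ^ M dvd f"
    by simp
qed simp

lemma fps_mult_nth_lessThan: "(f * g) $ n = f $ n * g $ 0 + (\<Sum>i<n. f $ i * g $ (n - i))"
proof -
  have "{0..n} = insert n {..<n}"
    by auto
  then show ?thesis
    by (simp add: fps_mult_nth)
qed

lemma sum_atLeastAtMost_int_shift: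
  fixes g :: "int \<Rightarrow> 'a::comm_monoid_add"
  assumes "0 \<le> M" "g (- M) = 0" "g (M + 1) = 0"
  shows "(\<Sum>k\<in>{-M..M}. g (k + 1)) = (\<Sum>k\<in>{-M..M}. g k)"
proof -
  have "(\<Sum>k\<in>{-M..M}. g (k + 1)) = (\<Sum>k\<in>{-M+1..M+1}. g k)"
    by (rule sum.reindex_bij_witness[of _ "\<lambda>k. k - 1" "\<lambda>k. k + 1"]) auto
  also have "\<dots> = (\<Sum>k\<in>insert (-M) {-M+1..M+1}. g k)"
    using assms by simp
  also have "insert (-M) {-M+1..M+1} = insert (M + 1) {-M..M}"
    using assms by auto
  also have "(\<Sum>k\<in>insert (M + 1) {-M..M}. g k) = (\<Sum>k\<in>{-M..M}. g k)"
    using assms by simp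
  finally show ?thesis .
qed

lemma sum_atLeastAtMost_int_symmetric:
  fixes f :: "int \<Rightarrow> 'a::comm_semiring_1"
  assumes "\<And>k. f (- k) = f k"
  shows "(\<Sum>k\<in>{-int n..int n}. f k) = f 0 + 2 * (\<Sum>s\<in>{1..n}. f (int s))"
proof (induction n)
  case 0
  then show ?case by simp
next
  case (Suc n)
  have "{-int (Suc n)..int (Suc n)} = insert (int (Suc n)) (insert (- int (Suc n)) {-int n..int n})"
    by auto
  then show ?case
    using Suc assms[of "int (Suc n)"] by (simp add: algebra_simps mult_2)
qed

lemma prod_monom:
  "finite S \<Longrightarrow> (\<Prod>a\<in>S. monom (g a) (n a)) = monom (\<Prod>a\<in>S. g a) (\<Sum>a\<in>S. n a)"
  by (induction S rule: finite_induct) (simp_all add: mult_monom)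

lemma coeff_prod_linear:
  fixes g :: "'b \<Rightarrow> 'a::comm_semiring_1"
  assumes "finite A"
  shows "coeff (\<Prod>a\<in>A. [:1, g a:]) t = (\<Sum>S | S \<subseteq> A \<and> card S = t. \<Prod>a\<in>S. g a)"
proof -
  have "(\<Prod>a\<in>A. [:1, g a:]) = (\<Prod>a\<in>A. monom (g a) 1 + 1)"
    by (simp add: monom_Suc monom_0 one_pCons)
  also have "\<dots> = (\<Sum>S\<in>Pow A. (\<Prod>a\<in>S. monom (g a) 1) * (\<Prod>a\<in>A - S. 1))"
    by (rule prod_add[OF assms])
  also have "\<dots> = (\<Sum>S\<in>Pow A. monom (\<Prod>a\<in>S. g a) (card S))"
    by (intro sum.cong refl) (simp add: prod_monom rev_finite_subset[OF assms])
  finally have "coeff (\<Prod>a\<in>A. [:1, g a:]) t = (\<Sum>S\<in>Pow A. if card S = t then \<Prod>a\<in>S. g a else 0)"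
    by (simp add: coeff_sum coeff_monom eq_commute)
  also have "\<dots> = (\<Sum>S | S \<subseteq> A \<and> card S = t. \<Prod>a\<in>S. g a)"
    using assms by (simp add: sum.inter_filter[symmetric] Pow_def)
  finally show ?thesis .
qed

section \<open>Gaussian binomial coefficients\<close>

fun gauss_binom :: "'a::comm_ring_1 \<Rightarrow> nat \<Rightarrow> nat \<Rightarrow> 'a" where
  "gauss_binom b n 0 = 1"
| "gauss_binom b 0 (Suc j) = 0"
| "gauss_binom b (Suc n) (Suc j) = gauss_binom b n j + b ^ Suc j * gauss_binom b n (Suc j)"

lemma gauss_binom_eq_0: "n < j \<Longrightarrow> gauss_binom b n j = 0"
proof (induction n arbitrary: j)
  case 0
  then show ?case by (cases j) auto
next
  case (Suc n)
  then show ?case by (cases j) auto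
qed

lemma gauss_binom_1: "(1 - b) * gauss_binom b n 1 = 1 - b ^ n"
proof (induction n)
  case 0
  then show ?case by simp
next
  case (Suc n)
  have "(1 - b) * gauss_binom b (Suc n) 1 = (1 - b) + b * ((1 - b) * gauss_binom b n 1)"
    by (simp add: algebra_simps)
  also have "\<dots> = 1 - b ^ Suc n"
    unfolding Suc.IH by (simp add: algebra_simps)
  finally show ?case .
qed

lemma gauss_binom_ratio:
  "(1 - b ^ Suc j) * gauss_binom b n (Suc j) = (1 - b ^ (n - j)) * gauss_binom b n j"
proof (induction n arbitrary: j)
  case 0
  then show ?case by simp
next
  case (Suc n)
  show ?case
  proof (cases j)
    case 0
    then show ?thesis using gauss_binom_1[of b "Suc n"] by simp
  next
    case (Suc i)
    show ?thesis
    proof (cases "i < n")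
      case False
      then show ?thesis using Suc by (simp add: gauss_binom_eq_0)
    next
      case True
      have "Suc j + (n - j) = Suc n" "j + (n - i) = Suc n"
        using True Suc by simp_all
      then have upper: "b ^ Suc j * b ^ (n - j) = b ^ Suc n" and lower: "b ^ j * b ^ (n - i) = b ^ Suc n"
        by (metis power_add)+
      have "(1 - b ^ Suc j) * gauss_binom b (Suc n) (Suc j)
          = (1 - b ^ Suc j) * gauss_binom b n j + b ^ Suc j * ((1 - b ^ Suc j) * gauss_binom b n (Suc j))"
        by (simp add: algebra_simps)
      also have "\<dots> = (1 - b ^ Suc j + b ^ Suc j * (1 - b ^ (n - j))) * gauss_binom b n j"
        by (simp only: Suc.IH distrib_right mult.assoc)
      also have "1 - b ^ Suc j + b ^ Suc j * (1 - b ^ (n - j)) = 1 - b ^ j + b ^ j * (1 - b ^ (n - i))"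
        by (simp only: right_diff_distrib mult_1_right upper lower) simp
      also have "(1 - b ^ j + b ^ j * (1 - b ^ (n - i))) * gauss_binom b n j
          = (1 - b ^ (n - i)) * gauss_binom b n i + b ^ j * ((1 - b ^ (n - i)) * gauss_binom b n j)"
        unfolding Suc by (simp only: Suc.IH distrib_right mult.assoc)
      also have "\<dots> = (1 - b ^ (Suc n - j)) * gauss_binom b (Suc n) j"
        using Suc by (simp add: algebra_simps)
      finally show ?thesis .
    qed
  qed
qed

lemma gauss_binom_Suc_Suc':
  fixes b :: "'a::idom"
  assumes "b ^ Suc j \<noteq> 1"
  shows "gauss_binom b (Suc n) (Suc j) = b ^ (n - j) * gauss_binom b n j + gauss_binom b n (Suc j)"
proof -
  have "(1 - b ^ Suc j) * (gauss_binom b (Suc n) (Suc j) - (b ^ (n - j) * gauss_binom b n j + gauss_binom b n (Suc j)))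
      = (1 - b ^ Suc j) * ((1 - b ^ (n - j)) * gauss_binom b n j - (1 - b ^ Suc j) * gauss_binom b n (Suc j))"
    by (simp add: algebra_simps)
  also have "\<dots> = 0"
    by (simp only: gauss_binom_ratio diff_self mult_zero_right)
  finally show ?thesis
    using assms by simp
qed

lemma gauss_binom_diff_Suc:
  fixes b :: "'a::idom"
  assumes "b ^ Suc j \<noteq> 1"
  shows "b ^ min (n - j) (Suc j) dvd gauss_binom b n j - gauss_binom b n (Suc j)"
proof -
  have "gauss_binom b n j - gauss_binom b n (Suc j)
      = b ^ (n - j) * gauss_binom b n j - b ^ Suc j * gauss_binom b n (Suc j)"
    using gauss_binom.simps(3)[of b n j] gauss_binom_Suc_Suc'[OF assms, of n]
    by (metis add_diff_cancel_left add.commute)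
  moreover have "b ^ min (n - j) (Suc j) dvd b ^ (n - j)" "b ^ min (n - j) (Suc j) dvd b ^ Suc j"
    by (intro le_imp_power_dvd; simp)+
  ultimately show ?thesis
    by (metis dvd_diff dvd_mult2)
qed

lemma gauss_binom_central_upper:
  fixes b :: "'a::idom"
  assumes "\<And>k. b ^ Suc k \<noteq> 1" "i \<le> L"
  shows "b ^ (L - i + 1) dvd gauss_binom b (2 * L) (L + i) - gauss_binom b (2 * L) L"
  using assms(2)
proof (induction i)
  case 0
  then show ?case by simp
next
  case (Suc i)
  have "b ^ (L - Suc i + 1) dvd gauss_binom b (2 * L) (L + i) - gauss_binom b (2 * L) L"
    using Suc le_imp_power_dvd[of "L - Suc i + 1" "L - i + 1" b] by (auto intro: dvd_trans)
  moreover have "b ^ (L - Suc i + 1) dvd gauss_binom b (2 * L) (L + i) - gauss_binom b (2 * L) (L + Suc i)"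
  proof -
    have "min (2 * L - (L + i)) (Suc (L + i)) = L - Suc i + 1"
      using Suc.prems by simp
    then show ?thesis
      using gauss_binom_diff_Suc[OF assms(1), of "2 * L" "L + i"] by simp
  qed
  ultimately have "b ^ (L - Suc i + 1) dvd (gauss_binom b (2 * L) (L + i) - gauss_binom b (2 * L) L)
      - (gauss_binom b (2 * L) (L + i) - gauss_binom b (2 * L) (L + Suc i))"
    by (rule dvd_diff)
  then show ?case
    by simp
qed

lemma gauss_binom_central_lower:
  fixes b :: "'a::idom"
  assumes "\<And>k. b ^ Suc k \<noteq> 1" "i \<le> L"
  shows "b ^ (L - i + 1) dvd gauss_binom b (2 * L) (L - i) - gauss_binom b (2 * L) L"
  using assms(2)
proof (induction i)
  case 0
  then show ?case by simp
next
  case (Suc i)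
  have "b ^ (L - Suc i + 1) dvd gauss_binom b (2 * L) (L - i) - gauss_binom b (2 * L) L"
    using Suc le_imp_power_dvd[of "L - Suc i + 1" "L - i + 1" b] by (auto intro: dvd_trans)
  moreover have "b ^ (L - Suc i + 1) dvd gauss_binom b (2 * L) (L - Suc i) - gauss_binom b (2 * L) (L - i)"
  proof -
    have "min (2 * L - (L - Suc i)) (Suc (L - Suc i)) = L - Suc i + 1" "Suc (L - Suc i) = L - i"
      using Suc.prems by simp_all
    then show ?thesis
      using gauss_binom_diff_Suc[OF assms(1), of "2 * L" "L - Suc i"] by simp
  qed
  ultimately have "b ^ (L - Suc i + 1) dvd (gauss_binom b (2 * L) (L - Suc i) - gauss_binom b (2 * L) (L - i))
      + (gauss_binom b (2 * L) (L - i) - gauss_binom b (2 * L) L)"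
    by (rule dvd_add[rotated])
  then show ?case
    by simp
qed

lemma gauss_binom_Suc_Suc_Suc:
  fixes b :: "'a::idom"
  assumes "\<And>k. b ^ Suc k \<noteq> 1"
  shows "gauss_binom b (Suc (Suc n)) (Suc j) = (1 + b ^ Suc n) * gauss_binom b n j
    + (if j = 0 then 0 else b ^ (Suc n - j) * gauss_binom b n (j - 1))
    + b ^ Suc j * gauss_binom b n (Suc j)"
proof -
  have lower: "gauss_binom b (Suc n) j
      = (if j = 0 then 0 else b ^ (Suc n - j) * gauss_binom b n (j - 1)) + gauss_binom b n j"
    using gauss_binom_Suc_Suc'[OF assms, of n "j - 1"] by (cases j) simp_all
  have "b ^ Suc j * (b ^ (n - j) * gauss_binom b n j) = b ^ Suc n * gauss_binom b n j"
  proof (cases "j \<le> n")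
    case True
    then have "Suc j + (n - j) = Suc n" by simp
    then show ?thesis by (metis power_add mult.assoc)
  qed (simp add: gauss_binom_eq_0)
  then show ?thesis
    unfolding gauss_binom.simps(3)[of b "Suc n"] gauss_binom_Suc_Suc'[OF assms, of n j] lower
    by (simp add: algebra_simps)
qed

section \<open>Dickson polynomials\<close>

(* dickson n (z + 1/z) = z^n + z^-n *)
fun dickson :: "nat \<Rightarrow> 'a::comm_ring_1 poly" where
  "dickson 0 = [:2:]"
| "dickson (Suc 0) = [:0, 1:]"
| "dickson (Suc (Suc n)) = [:0, 1:] * dickson (Suc n) - dickson n"

lemma dickson_nat_abs_rec:
  "[:0, 1:] * dickson (nat \<bar>k\<bar>) = dickson (nat \<bar>k + 1\<bar>) + dickson (nat \<bar>k - 1\<bar>)"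
proof -
  consider "k = 0" | "k \<ge> 1" | "k \<le> -1" by linarith
  then show ?thesis
  proof cases
    case 1
    then show ?thesis by simp
  next
    case 2
    then have "nat \<bar>k + 1\<bar> = Suc (Suc (nat \<bar>k - 1\<bar>))" "nat \<bar>k\<bar> = Suc (nat \<bar>k - 1\<bar>)"
      by simp_all
    then show ?thesis by simp
  next
    case 3
    then have "nat \<bar>k - 1\<bar> = Suc (Suc (nat \<bar>k + 1\<bar>))" "nat \<bar>k\<bar> = Suc (nat \<bar>k + 1\<bar>)"
      by simp_all
    then show ?thesis by simp
  qed
qed

lemma coeff_dickson: "coeff (dickson n :: 'a::comm_ring_1 poly) t = of_int (coeff (dickson n :: int poly) t)"
proof (induction n arbitrary: t rule: dickson.induct)
  case 1
  then show ?case by (cases t) auto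
next
  case 2
  then show ?case by (cases t) (auto simp: coeff_pCons')
next
  case (3 n)
  then show ?case by (cases t) simp_all
qed

lemma even_coeff_0_dickson: "even (coeff (dickson n :: int poly) 0)"
  by (induction n rule: dickson.induct) auto

lemma even_coeff_dickson_0: "even (coeff (dickson 0 :: int poly) t)"
  by (cases t) auto

section \<open>A finite Jacobi triple product\<close>

lemma fps_X_power_2_power_Suc_neq_1: "(fps_X ^ 2 :: 'a::comm_ring_1 fps) ^ Suc k \<noteq> 1"
proof
  assume "(fps_X ^ 2 :: 'a fps) ^ Suc k = 1"
  then have "((fps_X ^ 2 :: 'a fps) ^ Suc k) $ 0 = 1 $ 0" by simp
  then show False by (simp flip: power_mult)
qed

(* The coefficient of z^k in prod_{i<L} (1 + z q^(2i+1)) (1 + q^(2i+1) / z), where q = fps_X. *)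
definition triple_product_coeff :: "nat \<Rightarrow> int \<Rightarrow> 'a::idom fps" where
  "triple_product_coeff L k =
     (if \<bar>k\<bar> \<le> int L
      then fps_X ^ nat (k^2) * gauss_binom (fps_X ^ 2) (2 * L) (nat (int L + k)) else 0)"

lemma triple_product_coeff_eq_0: "int L < \<bar>k\<bar> \<Longrightarrow> triple_product_coeff L k = 0"
  by (simp add: triple_product_coeff_def)

lemma triple_product_coeff_eq:
  "- int L \<le> k \<Longrightarrow>
   triple_product_coeff L k = fps_X ^ nat (k^2) * gauss_binom (fps_X ^ 2) (2 * L) (nat (int L + k))"
  by (auto simp: triple_product_coeff_def gauss_binom_eq_0)

lemma fps_X_mult_triple_product_coeff_plus_1:
  fixes j :: nat
  assumes "int j = int L + k"
  shows "fps_X ^ (2 * L + 1) * triple_product_coeff L (k + 1)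
    = fps_X ^ nat (k^2) * ((fps_X ^ 2) ^ Suc j * gauss_binom (fps_X ^ 2) (2 * L) (Suc j))"
proof -
  have "int (2 * L + 1 + nat ((k + 1)^2)) = int (nat (k^2) + 2 * Suc j)"
    using assms by (simp; simp add: power2_eq_square algebra_simps)
  then have exp: "2 * L + 1 + nat ((k + 1)^2) = nat (k^2) + 2 * Suc j"
    by (simp only: of_nat_eq_iff)
  have "nat (int L + (k + 1)) = Suc j" "- int L \<le> k + 1"
    using assms by auto
  then have "fps_X ^ (2 * L + 1) * triple_product_coeff L (k + 1)
      = fps_X ^ (2 * L + 1 + nat ((k + 1)^2)) * gauss_binom (fps_X ^ 2) (2 * L) (Suc j)"
    by (simp only: triple_product_coeff_eq power_add mult.assoc)
  also have "\<dots> = fps_X ^ nat (k^2) * ((fps_X ^ 2) ^ Suc j * gauss_binom (fps_X ^ 2) (2 * L) (Suc j))"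
    by (simp only: exp power_add power_mult mult.assoc)
  finally show ?thesis .
qed

lemma fps_X_mult_triple_product_coeff_minus_1:
  fixes j :: nat
  assumes "int j = int L + k" "j \<le> 2 * L + 1"
  shows "fps_X ^ (2 * L + 1) * triple_product_coeff L (k - 1)
    = fps_X ^ nat (k^2) *
      (if j = 0 then 0 else (fps_X ^ 2) ^ (Suc (2 * L) - j) * gauss_binom (fps_X ^ 2) (2 * L) (j - 1))"
proof (cases "j = 0")
  case True
  then have "int L < \<bar>k - 1\<bar>"
    using assms by simp
  then show ?thesis
    using True by (simp add: triple_product_coeff_eq_0)
next
  case False
  have "int (2 * L + 1 + nat ((k - 1)^2)) = int (nat (k^2) + 2 * (Suc (2 * L) - j))"
    using assms by (simp add: of_nat_diff; simp add: power2_eq_square algebra_simps)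
  then have exp: "2 * L + 1 + nat ((k - 1)^2) = nat (k^2) + 2 * (Suc (2 * L) - j)"
    by (simp only: of_nat_eq_iff)
  have "nat (int L + (k - 1)) = j - 1" "- int L \<le> k - 1"
    using assms False by auto
  then have "fps_X ^ (2 * L + 1) * triple_product_coeff L (k - 1)
      = fps_X ^ (2 * L + 1 + nat ((k - 1)^2)) * gauss_binom (fps_X ^ 2) (2 * L) (j - 1)"
    by (simp only: triple_product_coeff_eq power_add mult.assoc)
  also have "\<dots> = fps_X ^ nat (k^2) * ((fps_X ^ 2) ^ (Suc (2 * L) - j) * gauss_binom (fps_X ^ 2) (2 * L) (j - 1))"
    by (simp only: exp power_add power_mult mult.assoc)
  finally show ?thesis
    using False by simp
qed

lemma triple_product_coeff_Suc:
  "triple_product_coeff (Suc L) k =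
     (1 + fps_X ^ (2 * (2 * L + 1))) * triple_product_coeff L k
     + fps_X ^ (2 * L + 1) * (triple_product_coeff L (k - 1) + triple_product_coeff L (k + 1))"
proof -
  consider "int L + 1 < \<bar>k\<bar>" | "k = - int L - 1" | "- int L \<le> k" "k \<le> int L + 1"
    by linarith
  then show ?thesis
  proof cases
    case 1
    then have "int (Suc L) < \<bar>k\<bar>" "int L < \<bar>k\<bar>" "int L < \<bar>k - 1\<bar>" "int L < \<bar>k + 1\<bar>"
      by auto
    then show ?thesis by (simp only: triple_product_coeff_eq_0) simp
  next
    case 2
    have "int (nat (k^2)) = int (2 * L + 1 + nat ((k + 1)^2))"
      using 2 by (simp; simp add: power2_eq_square algebra_simps)
    then have "nat (k^2) = 2 * L + 1 + nat ((k + 1)^2)"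
      by (simp only: of_nat_eq_iff)
    then show ?thesis
      using 2 by (simp add: triple_product_coeff_def power_add)
  next
    case 3
    define j where "j = nat (int L + k)"
    have j: "int j = int L + k" "j \<le> 2 * L + 1"
      using 3 by (simp_all add: j_def)
    have "\<bar>k\<bar> \<le> int (Suc L)" "nat (int (Suc L) + k) = Suc j" "2 * Suc L = Suc (Suc (2 * L))"
      using 3 by (auto simp: j_def)
    then have lhs: "triple_product_coeff (Suc L) k
        = fps_X ^ nat (k^2) * gauss_binom (fps_X ^ 2) (Suc (Suc (2 * L))) (Suc j)"
      by (simp only: triple_product_coeff_def if_True)
    have mid: "triple_product_coeff L k = fps_X ^ nat (k^2) * gauss_binom (fps_X ^ 2) (2 * L) j"
      using 3 by (simp add: triple_product_coeff_eq j_def)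
    show ?thesis
      unfolding lhs mid distrib_left fps_X_mult_triple_product_coeff_plus_1[OF j(1)]
        fps_X_mult_triple_product_coeff_minus_1[OF j]
        gauss_binom_Suc_Suc_Suc[OF fps_X_power_2_power_Suc_neq_1] power_mult[symmetric]
      by (simp add: algebra_simps)
  qed
qed

lemma sum_smult_dickson_mult_linear:
  fixes c :: "int \<Rightarrow> 'a::comm_ring_1" and M :: int
  assumes "0 \<le> M" "\<And>k. M \<le> \<bar>k\<bar> \<Longrightarrow> c k = 0"
  shows "(\<Sum>k\<in>{-M..M}. smult (c k) (dickson (nat \<bar>k\<bar>))) * [:a, b:]
    = (\<Sum>k\<in>{-M..M}. smult (a * c k + b * (c (k - 1) + c (k + 1))) (dickson (nat \<bar>k\<bar>)))"
proof -
  let ?D = "\<lambda>k. dickson (nat \<bar>k\<bar>) :: 'a poly"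
  have "(\<Sum>k\<in>{-M..M}. smult (c k) (?D k)) * [:a, b:]
      = (\<Sum>k\<in>{-M..M}. smult (a * c k) (?D k) + smult (b * c k) (?D (k + 1)) + smult (b * c k) (?D (k - 1)))"
    unfolding sum_distrib_right
  proof (rule sum.cong[OF refl])
    fix k
    have "p * [:a, b:] = smult a p + smult b ([:0, 1:] * p)" for p :: "'a poly"
      by simp
    then have "?D k * [:a, b:] = smult a (?D k) + smult b (?D (k + 1) + ?D (k - 1))"
      by (simp only: dickson_nat_abs_rec)
    then show "smult (c k) (?D k) * [:a, b:]
        = smult (a * c k) (?D k) + smult (b * c k) (?D (k + 1)) + smult (b * c k) (?D (k - 1))"
      by (simp only: mult_smult_left smult_add_right smult_smult mult.commute[of "c k"] add.assoc)
  qed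
  also have "(\<Sum>k\<in>{-M..M}. smult (b * c k) (?D (k + 1))) = (\<Sum>k\<in>{-M..M}. smult (b * c (k - 1)) (?D k))"
    using sum_atLeastAtMost_int_shift[of M "\<lambda>k. smult (b * c (k - 1)) (?D k)"] assms by simp
  moreover have "(\<Sum>k\<in>{-M..M}. smult (b * c k) (?D (k - 1))) = (\<Sum>k\<in>{-M..M}. smult (b * c (k + 1)) (?D k))"
    using sum_atLeastAtMost_int_shift[of M "\<lambda>k. smult (b * c k) (?D (k - 1))"] assms by simp
  ultimately show ?thesis
    by (simp add: sum.distrib smult_add_left algebra_simps)
qed

(* Each factor (1 + z q^m) (1 + q^m / z) = 1 + q^(2m) + (z + 1/z) q^m is linear in z + 1/z. *)
theorem finite_jacobi_triple_product:
  fixes M :: int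
  assumes "int L \<le> M"
  shows "smult 2 (\<Prod>i<L. [:1 + fps_X ^ (2 * (2 * i + 1)), fps_X ^ (2 * i + 1):] :: 'a::idom fps poly)
    = (\<Sum>k\<in>{-M..M}. smult (triple_product_coeff L k) (dickson (nat \<bar>k\<bar>)))"
  using assms
proof (induction L)
  case 0
  have "(\<Sum>k\<in>{-M..M}. smult (triple_product_coeff 0 k) (dickson (nat \<bar>k\<bar>)) :: 'a fps poly)
      = (\<Sum>k\<in>{-M..M}. if k = 0 then [:2:] else 0)"
    by (rule sum.cong) (auto simp: triple_product_coeff_def)
  also have "\<dots> = [:2:]"
    using 0 by simp
  finally show ?case
    by simp
next
  case (Suc L)
  let ?F = "\<lambda>i. [:1 + fps_X ^ (2 * (2 * i + 1)), fps_X ^ (2 * i + 1):] :: 'a fps poly"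
  have "smult 2 (\<Prod>i<Suc L. ?F i) = smult 2 (\<Prod>i<L. ?F i) * ?F L"
    by (simp only: prod.lessThan_Suc mult_smult_left)
  also have "\<dots> = (\<Sum>k\<in>{-M..M}. smult (triple_product_coeff L k) (dickson (nat \<bar>k\<bar>))) * ?F L"
    using Suc by simp
  also have "\<dots> = (\<Sum>k\<in>{-M..M}. smult (triple_product_coeff (Suc L) k) (dickson (nat \<bar>k\<bar>)))"
    using Suc.prems
    by (subst sum_smult_dickson_mult_linear) (simp_all add: triple_product_coeff_eq_0 triple_product_coeff_Suc)
  finally show ?case .
qed

section \<open>Truncation modulo a power of q\<close>

(* Off the centre the Gaussian binomial is only congruent modulo q^(2(L - |k| + 1)), but the
   factor q^(k^2) makes up for it: k^2 + 2(L - |k| + 1) >= 2L + 1. *)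
lemma triple_product_coeff_cong:
  assumes "\<bar>k\<bar> \<le> int L"
  shows "fps_X ^ (2 * L + 1) dvd
    triple_product_coeff L k - fps_X ^ nat (k^2) * gauss_binom (fps_X ^ 2) (2 * L) L"
proof -
  define i where "i = nat \<bar>k\<bar>"
  have "nat (k^2) = nat (\<bar>k\<bar>^2)"
    by simp
  also have "\<dots> = i^2"
    unfolding i_def by (rule nat_power_eq) simp
  finally have i: "i \<le> L" "nat (k^2) = i^2"
    using assms by (simp_all add: i_def)
  have central: "(fps_X ^ 2) ^ (L - i + 1) dvd
      gauss_binom (fps_X ^ 2) (2 * L) (nat (int L + k)) - gauss_binom (fps_X ^ 2 :: 'a fps) (2 * L) L"
  proof (cases "k \<ge> 0")
    case True
    then have "nat (int L + k) = L + i" by (simp add: i_def)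
    then show ?thesis
      using gauss_binom_central_upper[OF fps_X_power_2_power_Suc_neq_1 i(1)] by simp
  next
    case False
    then have "nat (int L + k) = L - i" using assms by (simp add: i_def)
    then show ?thesis
      using gauss_binom_central_lower[OF fps_X_power_2_power_Suc_neq_1 i(1)] by simp
  qed
  have diff: "(triple_product_coeff L k :: 'a fps) - fps_X ^ nat (k^2) * gauss_binom (fps_X ^ 2) (2 * L) L
      = fps_X ^ i^2 * (gauss_binom (fps_X ^ 2) (2 * L) (nat (int L + k)) - gauss_binom (fps_X ^ 2) (2 * L) L)"
    using assms i by (simp add: triple_product_coeff_eq right_diff_distrib)
  have "fps_X ^ i^2 * (fps_X ^ 2) ^ (L - i + 1) dvd
      (triple_product_coeff L k :: 'a fps) - fps_X ^ nat (k^2) * gauss_binom (fps_X ^ 2) (2 * L) L"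
    unfolding diff by (rule mult_dvd_mono[OF dvd_refl central])
  then have "fps_X ^ (i^2 + 2 * (L - i + 1)) dvd
      (triple_product_coeff L k :: 'a fps) - fps_X ^ nat (k^2) * gauss_binom (fps_X ^ 2) (2 * L) L"
    by (simp only: power_add power_mult)
  moreover have "2 * L + 1 \<le> i^2 + 2 * (L - i + 1)"
    using i(1) by (cases i) (auto simp: power2_eq_square)
  ultimately show ?thesis
    by (meson dvd_trans le_imp_power_dvd)
qed

definition theta_trunc :: "nat \<Rightarrow> 'a::comm_ring_1 fps poly" where
  "theta_trunc L = (\<Sum>k\<in>{-int L..int L}. smult (fps_X ^ nat (k^2)) (dickson (nat \<bar>k\<bar>)))"

lemma triple_product_cong_theta_trunc:
  "fps_X ^ (2 * L + 1) dvd
    2 * coeff (\<Prod>i<L. [:1 + fps_X ^ (2 * (2 * i + 1)), fps_X ^ (2 * i + 1):] :: 'a::idom fps poly) t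
    - gauss_binom (fps_X ^ 2) (2 * L) L * coeff (theta_trunc L) t"
proof -
  let ?C = "gauss_binom (fps_X ^ 2 :: 'a fps) (2 * L) L" and ?D = "\<lambda>k. coeff (dickson (nat \<bar>k\<bar>)) t"
  let ?P = "\<Prod>i<L. [:1 + fps_X ^ (2 * (2 * i + 1)), fps_X ^ (2 * i + 1):] :: 'a fps poly"
  have "2 * coeff ?P t = coeff (smult 2 ?P) t"
    by simp
  also have "\<dots> = (\<Sum>k\<in>{-int L..int L}. triple_product_coeff L k * ?D k)"
    unfolding finite_jacobi_triple_product[of L "int L", OF order_refl] coeff_sum by simp
  finally have "2 * coeff ?P t = (\<Sum>k\<in>{-int L..int L}. triple_product_coeff L k * ?D k)" .
  moreover have "?C * coeff (theta_trunc L) t = (\<Sum>k\<in>{-int L..int L}. fps_X ^ nat (k^2) * ?C * ?D k)"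
    by (simp add: theta_trunc_def coeff_sum sum_distrib_left algebra_simps)
  ultimately have "2 * coeff ?P t - ?C * coeff (theta_trunc L) t
      = (\<Sum>k\<in>{-int L..int L}. (triple_product_coeff L k - fps_X ^ nat (k^2) * ?C) * ?D k)"
    by (simp add: sum_subtractf algebra_simps)
  also have "fps_X ^ (2 * L + 1) dvd \<dots>"
    by (intro dvd_sum dvd_mult2 triple_product_coeff_cong) auto
  finally show ?thesis .
qed

section \<open>The generating function of m_odd\<close>

lemma m_odd_eq_coeff_prod:
  "m_odd a t n = coeff (\<Prod>i<(n + 1) div 2. [:1, modd_factor a (2 * i + 1):]) t $ n"
proof -
  have odds: "{k. odd k \<and> k \<le> n} = (\<lambda>i. 2 * i + 1) ` {..<(n + 1) div 2}"
  proof (intro equalityI subsetI)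
    fix k
    assume "k \<in> {k. odd k \<and> k \<le> n}"
    then have "k = 2 * (k div 2) + 1" "k div 2 < (n + 1) div 2"
      by (auto elim!: oddE)
    then show "k \<in> (\<lambda>i. 2 * i + 1) ` {..<(n + 1) div 2}"
      by blast
  qed auto
  have "m_odd a t n = coeff (\<Prod>m | odd m \<and> m \<le> n. [:1, modd_factor a m:]) t $ n"
    unfolding m_odd_def by (simp add: coeff_prod_linear)
  also have "(\<Prod>m | odd m \<and> m \<le> n. [:1, modd_factor a m:])
      = (\<Prod>i<(n + 1) div 2. [:1, modd_factor a (2 * i + 1):])"
    unfolding odds by (simp add: prod.reindex inj_on_def)
  finally show ?thesis .
qed

lemma modd_factor_0_mult:
  assumes "0 < m"
  shows "(1 + fps_X ^ (2 * m)) * modd_factor 0 m = fps_X ^ m"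
proof -
  let ?d = "1 + fps_const 0 * fps_X ^ m + fps_X ^ (2 * m) :: int fps"
  have "?d * fps_right_inverse ?d 1 = 1"
    using assms by (intro fps_right_inverse) simp
  then show ?thesis
    unfolding modd_factor_def by (simp add: algebra_simps)
qed

lemma prod_pCons_eq_smult_prod_modd_factor:
  "(\<Prod>i<L. [:1 + fps_X ^ (2 * (2 * i + 1)), fps_X ^ (2 * i + 1):])
    = smult (\<Prod>i<L. 1 + fps_X ^ (2 * (2 * i + 1))) (\<Prod>i<L. [:1, modd_factor 0 (2 * i + 1):])"
  unfolding prod_smult[symmetric]
proof (intro prod.cong refl)
  fix i
  show "[:1 + fps_X ^ (2 * (2 * i + 1)), fps_X ^ (2 * i + 1):]
      = smult (1 + fps_X ^ (2 * (2 * i + 1))) [:1, modd_factor 0 (2 * i + 1):]"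
    using modd_factor_0_mult[of "2 * i + 1"] by simp
qed

lemma modd_prod_cong_theta_trunc:
  "fps_X ^ (2 * L + 1) dvd
    coeff (\<Prod>i<L. [:1, modd_factor 0 (2 * i + 1):]) t * coeff (theta_trunc L) 0 - coeff (theta_trunc L) t"
proof -
  let ?P = "\<Prod>i<L. [:1, modd_factor 0 (2 * i + 1):]" and ?\<Theta> = "\<lambda>u. coeff (theta_trunc L) u :: int fps"
  let ?D = "\<Prod>i<L. 1 + fps_X ^ (2 * (2 * i + 1)) :: int fps"
    and ?C = "gauss_binom (fps_X ^ 2 :: int fps) (2 * L) L"
  have cong: "fps_X ^ (2 * L + 1) dvd 2 * ?D * coeff ?P u - ?C * ?\<Theta> u" for u
    using triple_product_cong_theta_trunc[where 'a=int, of L u]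
    unfolding prod_pCons_eq_smult_prod_modd_factor coeff_smult by (simp only: mult.assoc)
  \<comment> \<open>the case t = 0, where the coefficient of P is 1, eliminates C and the unit D\<close>
  have "coeff ?P 0 = 1"
    by (simp add: poly_0_coeff_0[symmetric] poly_prod)
  then have "2 * ?D * (coeff ?P t * ?\<Theta> 0 - ?\<Theta> t)
      = (2 * ?D * coeff ?P t - ?C * ?\<Theta> t) * ?\<Theta> 0 - (2 * ?D * coeff ?P 0 - ?C * ?\<Theta> 0) * ?\<Theta> t"
    by (simp add: algebra_simps)
  then have "fps_X ^ (2 * L + 1) dvd 2 * (?D * (coeff ?P t * ?\<Theta> 0 - ?\<Theta> t))"
    using cong by (simp add: dvd_diff mult.assoc)
  moreover have "?D $ 0 = 1"
    by (induction L) simp_all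
  ultimately show ?thesis
    by (simp only: fps_X_power_dvd_mult_2_iff fps_X_power_dvd_mult_unit_iff)
qed

section \<open>The congruence modulo 4\<close>

lemma nth_coeff_theta_trunc:
  "coeff (theta_trunc L :: int fps poly) t $ i
    = (if i = 0 then coeff (dickson 0 :: int poly) t else 0)
      + 2 * (\<Sum>s\<in>{1..L}. if i = s^2 then coeff (dickson s :: int poly) t else 0)"
proof -
  have "coeff (theta_trunc L :: int fps poly) t $ i
      = (\<Sum>k\<in>{-int L..int L}. if i = nat (k^2) then coeff (dickson (nat \<bar>k\<bar>) :: int poly) t else 0)"
    by (simp add: theta_trunc_def coeff_sum fps_sum_nth coeff_dickson[where 'a="int fps"] fps_X_power_mult_nth
        if_distrib[of "\<lambda>x. x * _"] cong: if_cong)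
  also have "\<dots> = (if i = 0 then coeff (dickson 0 :: int poly) t else 0)
      + 2 * (\<Sum>s\<in>{1..L}. if i = s^2 then coeff (dickson s :: int poly) t else 0)"
    by (subst sum_atLeastAtMost_int_symmetric) (simp_all add: nat_power_eq cong: if_cong)
  finally show ?thesis .
qed

lemma nth_coeff_theta_trunc_eq_0:
  "i \<notin> range (\<lambda>s. s^2) \<Longrightarrow> coeff (theta_trunc L :: int fps poly) t $ i = 0"
  by (auto simp: nth_coeff_theta_trunc intro!: sum.neutral)

lemma even_nth_coeff_theta_trunc: "even (coeff (theta_trunc L :: int fps poly) t $ i)"
  using even_coeff_dickson_0[of t] by (simp add: nth_coeff_theta_trunc)

lemma nth_coeff_theta_trunc_0_0: "coeff (theta_trunc L :: int fps poly) 0 $ 0 = 2"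
  by (auto simp: nth_coeff_theta_trunc intro!: sum.neutral)

lemma four_dvd_nth_coeff_theta_trunc_0:
  assumes "0 < i"
  shows "4 dvd coeff (theta_trunc L :: int fps poly) 0 $ i"
proof -
  have "even (\<Sum>s\<in>{1..L}. if i = s^2 then coeff (dickson s :: int poly) 0 else 0)"
    using even_coeff_0_dickson by (auto intro!: dvd_sum)
  then show ?thesis
    using assms by (auto simp: nth_coeff_theta_trunc elim!: evenE)
qed

(* Comparing coefficients of e g = r modulo 4 shows that e_j is even for j not in S; then each term
   e_i g_(n-i) of the coefficient at n is divisible by 8. *)
lemma four_dvd_nth_if_cong:
  fixes e g r :: "int fps" and S :: "nat set"
  assumes cong: "fps_X ^ M dvd e * g - r" and "n < M"
    and g_0: "g $ 0 = 2" and g_4: "\<And>i. 0 < i \<Longrightarrow> 4 dvd g $ i"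
    and g_supp: "\<And>i. i \<notin> S \<Longrightarrow> g $ i = 0"
    and r_even: "\<And>i. even (r $ i)" and r_supp: "\<And>i. i \<notin> S \<Longrightarrow> r $ i = 0"
    and n_not_sum: "\<And>i. i \<le> n \<Longrightarrow> i \<notin> S \<or> n - i \<notin> S"
  shows "4 dvd e $ n"
proof -
  have conv: "2 * e $ j + (\<Sum>i<j. e $ i * g $ (j - i)) = r $ j" if "j < M" for j
    using cong that fps_mult_nth_lessThan[of e g j] by (simp add: fps_X_power_dvd_iff g_0 mult.commute)
  have even: "even (e $ j)" if "j < M" "j \<notin> S" for j
  proof -
    have "4 dvd (\<Sum>i<j. e $ i * g $ (j - i))"
      using g_4 by (auto intro!: dvd_sum)
    then have "4 dvd 2 * e $ j"
      using conv[OF \<open>j < M\<close>] r_supp[OF \<open>j \<notin> S\<close>]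
      by (metis add.commute add.right_neutral dvd_add_right_iff)
    then show ?thesis by auto
  qed
  have "8 dvd (\<Sum>i<n. e $ i * g $ (n - i))"
  proof (rule dvd_sum)
    fix i
    assume "i \<in> {..<n}"
    show "8 dvd e $ i * g $ (n - i)"
    proof (cases "n - i \<in> S")
      case True
      then have "even (e $ i)" "4 dvd g $ (n - i)"
        using \<open>i \<in> {..<n}\<close> \<open>n < M\<close> n_not_sum[of i] by (auto intro!: even g_4)
      then show ?thesis
        by (auto elim!: evenE)
    qed (simp add: g_supp)
  qed
  moreover have "r $ n = 0"
    using n_not_sum[of 0] g_0 g_supp by (intro r_supp) force
  ultimately have "8 dvd 2 * e $ n"
    using conv[OF \<open>n < M\<close>] by (metis add.commute add.right_neutral dvd_add_right_iff)
  then show ?thesis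
    by presburger
qed

lemma three_dvd_sum_squares:
  fixes a b :: nat
  assumes "3 dvd a^2 + b^2"
  shows "3 dvd a \<and> 3 dvd b"
proof -
  have "((a mod 3)^2 mod 3 + (b mod 3)^2 mod 3) mod 3 = 0"
    using assms by (simp only: power_mod mod_add_eq dvd_eq_mod_eq_0)
  moreover have "a mod 3 \<in> {0, 1, 2}" "b mod 3 \<in> {0, 1, 2}"
    by auto
  ultimately have "a mod 3 = 0 \<and> b mod 3 = 0"
    by (auto; presburger)
  then show ?thesis
    by auto
qed

lemma sum_squares_neq_if_3_exact_dvd:
  fixes a b n :: nat
  assumes "3 dvd n" "\<not> 9 dvd n"
  shows "a^2 + b^2 \<noteq> n"
proof
  assume n: "a^2 + b^2 = n"
  then obtain c d where "a = 3 * c" "b = 3 * d"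
    using three_dvd_sum_squares assms(1) by (meson dvdE)
  then have "n = 9 * (c^2 + d^2)"
    using n by (simp add: power_mult_distrib)
  with assms(2) show False
    by simp
qed

theorem four_dvd_m_odd_0_if_not_sum_squares:
  assumes "\<And>a b. a^2 + b^2 \<noteq> n"
  shows "4 dvd m_odd 0 t n"
proof -
  define L where "L = (n + 1) div 2"
  have "n < 2 * L + 1"
    by (simp add: L_def)
  moreover have "i \<notin> range (\<lambda>s. s^2) \<or> n - i \<notin> range (\<lambda>s. s^2)" if "i \<le> n" for i
  proof (rule ccontr)
    assume "\<not> (i \<notin> range (\<lambda>s. s^2) \<or> n - i \<notin> range (\<lambda>s. s^2))"
    then obtain a b where "i = a^2" "n - i = b^2"
      by auto
    then have "a^2 + b^2 = n"
      using that by simp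
    with assms show False ..
  qed
  ultimately have "4 dvd coeff (\<Prod>i<L. [:1, modd_factor 0 (2 * i + 1):]) t $ n"
    by (intro four_dvd_nth_if_cong[OF modd_prod_cong_theta_trunc, where S = "range (\<lambda>s. s^2)"])
      (simp_all add: nth_coeff_theta_trunc_0_0 four_dvd_nth_coeff_theta_trunc_0
         nth_coeff_theta_trunc_eq_0 even_nth_coeff_theta_trunc)
  then show ?thesis
    by (simp add: m_odd_eq_coeff_prod L_def)
qed

theorem mainTheorem15:
  fixes J N r :: nat
  assumes "r \<in> {21, 33}"
  shows "(4::int) dvd m_odd 0 (2 * J + 1) (36 * N + r)"
proof (rule four_dvd_m_odd_0_if_not_sum_squares)
  fix a b :: nat
  have "r = 21 \<or> r = 33"
    using assms by simp
  then have "3 dvd 36 * N + r" "\<not> 9 dvd 36 * N + r"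
    by presburger+
  then show "a^2 + b^2 \<noteq> 36 * N + r"
    by (rule sum_squares_neq_if_3_exact_dvd)
qed

end
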